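(* Suppose positive individuals of groups $a$ and $b$ have the same feature distribution, i.e. the conditional distribution of $X$ given $Y=1$ is independent of $G$. Let $c_a$ be an outcome monotonic cost and suppose group $b$ is disadvantaged in cost compared to group $a$, i.e. $c_b(x,x')=\kappa\, c_a(x,x')$ for all $x,x'\in\mathcal X$ and some scalar $\kappa>1$. Then the social gap $\mathcal G(\tau)$ is non-negative and monotonically non-decreasing in the threshold $\tau$.
   Context: Individuals have features $x\in\mathcal X$, label $y\in\{0,1\}$ and group $g\in\{a,b\}$, with $(X,Y,G)$ jointly distributed. Outcome likelihood $\ell(x)=\Pr[Y=1\mid X=x]>0$ for all $x$. A cost $c$ is outcome monotonic if for all $x,x',x^*$: (i) $c(x,x')>0$ iff $\ell(x')>\ell(x)$; (ii) $c(x,x^* )>c(x',x^* )>0$ iff $\ell(x^* )>\ell(x')>\ell(x)$; (iii) $c(x,x^* )>c(x,x')>0$ iff $\ell(x^* )>\ell(x')>\ell(x)$. Group $g$ has its own cost $c_g:\mathcal X\times\mathcal X\to\mathbb R_{\ge0}$ for changing features. Threshold classifier $f_\tau(x)=\mathbf 1[\ell(x)\ge\tau]$. Group social burden $\mathcal B_g(\tau)=\mathbb E[\min_{x':f_\tau(x')=1}c_g(X,x')\mid Y=1,G=g]$; social gap $\mathcal G(\tau)=\mathcal B_b(\tau)-\mathcal B_a(\tau)$. *)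

theory Defs
  imports "HOL-Probability.Probability"
begin

datatype grp = GA | GB

definition outcome_monotonic :: "('x \<Rightarrow> real) \<Rightarrow> ('x \<Rightarrow> 'x \<Rightarrow> real) \<Rightarrow> bool" where
  "outcome_monotonic l c \<longleftrightarrow>
     (\<forall>x x'. c x x' > 0 \<longleftrightarrow> l x' > l x) \<and>
     (\<forall>x x' xs. (c x xs > c x' xs \<and> c x' xs > 0) \<longleftrightarrow> (l xs > l x' \<and> l x' > l x)) \<and>
     (\<forall>x x' xs. (c x xs > c x x' \<and> c x x' > 0) \<longleftrightarrow> (l xs > l x' \<and> l x' > l x))"

definition thr_clf :: "('x \<Rightarrow> real) \<Rightarrow> real \<Rightarrow> 'x \<Rightarrow> nat" where
  "thr_clf l \<tau> x = (if l x \<ge> \<tau> then 1 else 0)"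

text \<open>l is (a version of) Pr[Y = 1 | X = x]: for every measurable feature set S,
  Pr[Y = 1, X in S] = E[1[X in S] l(X)].\<close>
definition is_outcome_likelihood ::
  "'w measure \<Rightarrow> 'x measure \<Rightarrow> ('w \<Rightarrow> 'x) \<Rightarrow> ('w \<Rightarrow> nat) \<Rightarrow> ('x \<Rightarrow> real) \<Rightarrow> bool" where
  "is_outcome_likelihood M N X Y l \<longleftrightarrow>
     l \<in> borel_measurable N \<and>
     (\<forall>S \<in> sets N. emeasure M {\<omega> \<in> space M. Y \<omega> = 1 \<and> X \<omega> \<in> S}
        = (\<integral>\<^sup>+ \<omega>. indicator {\<omega> \<in> space M. X \<omega> \<in> S} \<omega> * ennreal (l (X \<omega>)) \<partial>M))"

definition pos_event :: "'w measure \<Rightarrow> ('w \<Rightarrow> nat) \<Rightarrow> ('w \<Rightarrow> grp) \<Rightarrow> grp \<Rightarrow> 'w set" where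
  "pos_event M Y G g = {\<omega> \<in> space M. Y \<omega> = 1 \<and> G \<omega> = g}"

text \<open>Group social burden
  B_g(tau) = E[ min_{x' : f_tau(x') = 1} c_g(X, x') | Y = 1, G = g ],
  as an elementary conditional expectation (nonnegative integral divided by the
  probability of the conditioning event); the minimum is rendered as an infimum
  in [0, infinity] (infinite if no x' is accepted).\<close>
definition social_burden ::
  "'w measure \<Rightarrow> ('w \<Rightarrow> 'x) \<Rightarrow> ('w \<Rightarrow> nat) \<Rightarrow> ('w \<Rightarrow> grp) \<Rightarrow> ('x \<Rightarrow> real)
     \<Rightarrow> (grp \<Rightarrow> 'x \<Rightarrow> 'x \<Rightarrow> real) \<Rightarrow> grp \<Rightarrow> real \<Rightarrow> ennreal" where
  "social_burden M X Y G l c g \<tau> =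
     (\<integral>\<^sup>+ \<omega>. indicator (pos_event M Y G g) \<omega> *
          (INF x' \<in> {x'. thr_clf l \<tau> x' = 1}. ennreal (c g (X \<omega>) x')) \<partial>M)
     / emeasure M (pos_event M Y G g)"

definition social_gap ::
  "'w measure \<Rightarrow> ('w \<Rightarrow> 'x) \<Rightarrow> ('w \<Rightarrow> nat) \<Rightarrow> ('w \<Rightarrow> grp) \<Rightarrow> ('x \<Rightarrow> real)
     \<Rightarrow> (grp \<Rightarrow> 'x \<Rightarrow> 'x \<Rightarrow> real) \<Rightarrow> real \<Rightarrow> ereal" where
  "social_gap M X Y G l c \<tau> =
     enn2ereal (social_burden M X Y G l c GB \<tau>) - enn2ereal (social_burden M X Y G l c GA \<tau>)"

end

theory Submission
  imports Defs
begin

text \<open>For an outcome monotonic cost the cheapest way to reach acceptance depends on the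
  features only through the likelihood and is antitone in it, hence measurable; so the burden
  of a group is an expectation of one fixed function of \<open>X\<close> under the conditional distribution
  of \<open>X\<close> given \<open>Y = 1, G = g\<close>. These distributions agree for both groups, and scaling the cost
  by \<open>\<kappa>\<close> scales every acceptance cost by \<open>\<kappa>\<close>, so \<open>B\<^sub>b = \<kappa> B\<^sub>a\<close> and the gap is
  \<open>(\<kappa> - 1) B\<^sub>a\<close>. Raising the threshold shrinks the accepted set, so \<open>B\<^sub>a\<close> is non-decreasing.\<close>

lemma ennreal_mult_INF:
  fixes f :: "'a \<Rightarrow> ennreal"
  assumes "k > 0"
  shows "(INF x\<in>A. ennreal k * f x) = ennreal k * (INF x\<in>A. f x)"
proof (rule antisym)
  have cancel: "ennreal (1 / k) * (ennreal k * y) = y" for y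
    using assms by (simp add: mult.assoc[symmetric] ennreal_mult[symmetric])
  have "ennreal (1 / k) * (INF x\<in>A. ennreal k * f x) \<le> (INF x\<in>A. f x)"
    by (rule INF_greatest, subst cancel[symmetric]) (intro mult_left_mono INF_lower; simp)
  then have "ennreal k * (ennreal (1 / k) * (INF x\<in>A. ennreal k * f x)) \<le> ennreal k * (INF x\<in>A. f x)"
    by (rule mult_left_mono) simp
  then show "(INF x\<in>A. ennreal k * f x) \<le> ennreal k * (INF x\<in>A. f x)"
    using assms by (simp add: mult.assoc[symmetric] ennreal_mult[symmetric])
qed (intro INF_greatest mult_left_mono INF_lower; simp)

lemma borel_measurable_antimono_ennreal:
  fixes \<psi> :: "real \<Rightarrow> ennreal"
  assumes "antimono \<psi>"
  shows "\<psi> \<in> borel_measurable borel"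
proof (rule borel_measurableI_greater)
  fix y
  have "is_interval {x. y < \<psi> x}"
    unfolding is_interval_1 using assms by (auto intro: less_le_trans dest: antimonoD)
  then show "{x \<in> space borel. y < \<psi> x} \<in> sets borel"
    using real_interval_borel_measurable by simp
qed

text \<open>\<open>h\<close> factors through \<open>l\<close> via the antitone \<open>t \<mapsto> INF {h y | l y \<le> t}\<close>.\<close>
lemma borel_measurable_antitone_in:
  fixes h :: "'x \<Rightarrow> ennreal" and l :: "'x \<Rightarrow> real"
  assumes l: "l \<in> borel_measurable N" and anti: "\<And>x y. l x \<le> l y \<Longrightarrow> h y \<le> h x"
  shows "h \<in> borel_measurable N"
proof -
  define \<psi> where "\<psi> t = (INF y\<in>{y. l y \<le> t}. h y)" for t
  have "antimono \<psi>"
    by (auto simp: \<psi>_def antimono_def intro!: INF_superset_mono)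
  then have "\<psi> \<in> borel_measurable borel"
    by (rule borel_measurable_antimono_ennreal)
  moreover have "h = \<psi> \<circ> l"
    by (rule ext) (auto simp: \<psi>_def intro!: antisym INF_greatest INF_lower anti)
  ultimately show ?thesis
    using l by (simp add: measurable_comp)
qed

lemma outcome_monotonic_antitone:
  assumes om: "outcome_monotonic l c" and nonneg: "\<forall>x x'. c x x' \<ge> 0"
    and le: "l x \<le> l y"
  shows "c y x' \<le> c x x'"
proof (cases "l y < l x'")
  case False
  then have "\<not> c y x' > 0" using om unfolding outcome_monotonic_def by auto
  then show ?thesis using nonneg by (meson not_le order.strict_trans1)
next
  case True
  show ?thesis
  proof (cases "l x < l y")
    case True
    then have "c y x' < c x x'" using om \<open>l y < l x'\<close> unfolding outcome_monotonic_def by blast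
    then show ?thesis by simp
  next
    case False
    with le have eq: "l x = l y" by simp
    show ?thesis
    proof (rule ccontr)
      assume "\<not> c y x' \<le> c x x'"
      moreover have "c x x' > 0" using om True eq unfolding outcome_monotonic_def by auto
      ultimately have "l x' > l x \<and> l x > l y"
        using om unfolding outcome_monotonic_def by (meson not_le)
      then show False using eq by simp
    qed
  qed
qed


definition acceptance_cost :: "('x \<Rightarrow> real) \<Rightarrow> ('x \<Rightarrow> 'x \<Rightarrow> real) \<Rightarrow> real \<Rightarrow> 'x \<Rightarrow> ennreal" where
  "acceptance_cost l c \<tau> x = (INF x'\<in>{x'. thr_clf l \<tau> x' = 1}. ennreal (c x x'))"

lemma social_burden_eq_acceptance_cost:
  "social_burden M X Y G l c g \<tau> =
     (\<integral>\<^sup>+ \<omega>. indicator (pos_event M Y G g) \<omega> * acceptance_cost l (c g) \<tau> (X \<omega>) \<partial>M)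
       / emeasure M (pos_event M Y G g)"
  unfolding social_burden_def acceptance_cost_def ..

lemma acceptance_cost_mono:
  assumes "\<sigma> \<le> \<tau>"
  shows "acceptance_cost l c \<sigma> x \<le> acceptance_cost l c \<tau> x"
  unfolding acceptance_cost_def
  by (rule INF_superset_mono) (use assms in \<open>auto simp: thr_clf_def split: if_splits\<close>)

lemma acceptance_cost_antitone:
  assumes "outcome_monotonic l c" and "\<forall>x x'. c x x' \<ge> 0" and "l x \<le> l y"
  shows "acceptance_cost l c \<tau> y \<le> acceptance_cost l c \<tau> x"
  unfolding acceptance_cost_def
  by (intro INF_mono' ennreal_leI outcome_monotonic_antitone[OF assms])

lemma borel_measurable_acceptance_cost:
  assumes "l \<in> borel_measurable N" and "outcome_monotonic l c" and "\<forall>x x'. c x x' \<ge> 0"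
  shows "acceptance_cost l c \<tau> \<in> borel_measurable N"
  using assms by (intro borel_measurable_antitone_in acceptance_cost_antitone)

lemma acceptance_cost_scale:
  assumes "\<kappa> > 0" and "\<forall>x x'. c x x' \<ge> 0"
  shows "acceptance_cost l (\<lambda>x x'. \<kappa> * c x x') \<tau> x = ennreal \<kappa> * acceptance_cost l c \<tau> x"
  unfolding acceptance_cost_def
  using assms by (simp add: ennreal_mult ennreal_mult_INF)

lemma social_burden_mono: "mono (social_burden M X Y G l c g)"
  unfolding mono_def social_burden_eq_acceptance_cost divide_ennreal_def
  by (intro allI impI mult_right_mono nn_integral_mono mult_left_mono acceptance_cost_mono) auto

definition cond_distr :: "'w measure \<Rightarrow> 'x measure \<Rightarrow> ('w \<Rightarrow> 'x) \<Rightarrow> 'w set \<Rightarrow> 'x measure" where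
  "cond_distr M N X P = distr (density M (\<lambda>\<omega>. indicator P \<omega> / emeasure M P)) N X"

lemma nn_integral_cond_distr:
  assumes [measurable]: "X \<in> measurable M N" "P \<in> sets M" "h \<in> borel_measurable N"
  shows "integral\<^sup>N (cond_distr M N X P) h = (\<integral>\<^sup>+ \<omega>. indicator P \<omega> * h (X \<omega>) \<partial>M) / emeasure M P"
proof -
  have "integral\<^sup>N (cond_distr M N X P) h = (\<integral>\<^sup>+ \<omega>. indicator P \<omega> / emeasure M P * h (X \<omega>) \<partial>M)"
    unfolding cond_distr_def by (simp add: nn_integral_distr nn_integral_density)
  also have "\<dots> = (\<integral>\<^sup>+ \<omega>. indicator P \<omega> * h (X \<omega>) * inverse (emeasure M P) \<partial>M)"
    by (simp add: divide_ennreal_def ac_simps)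
  also have "\<dots> = (\<integral>\<^sup>+ \<omega>. indicator P \<omega> * h (X \<omega>) \<partial>M) * inverse (emeasure M P)"
    by (rule nn_integral_multc) simp
  finally show ?thesis by (simp add: divide_ennreal_def)
qed

lemma emeasure_cond_distr:
  assumes [measurable]: "X \<in> measurable M N" "P \<in> sets M" "S \<in> sets N"
  shows "emeasure (cond_distr M N X P) S = emeasure M ({\<omega> \<in> space M. X \<omega> \<in> S} \<inter> P) / emeasure M P"
proof -
  have "emeasure (cond_distr M N X P) S = integral\<^sup>N (cond_distr M N X P) (indicator S)"
    by (simp add: cond_distr_def)
  also have "\<dots> = (\<integral>\<^sup>+ \<omega>. indicator P \<omega> * indicator S (X \<omega>) \<partial>M) / emeasure M P"
    by (simp add: nn_integral_cond_distr)
  also have "(\<integral>\<^sup>+ \<omega>. indicator P \<omega> * indicator S (X \<omega>) \<partial>M)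
      = (\<integral>\<^sup>+ \<omega>. indicator ({\<omega> \<in> space M. X \<omega> \<in> S} \<inter> P) \<omega> \<partial>M)"
    using sets.sets_into_space[OF assms(2)]
    by (intro nn_integral_cong) (auto simp: indicator_def)
  also have "\<dots> = emeasure M ({\<omega> \<in> space M. X \<omega> \<in> S} \<inter> P)"
    by (rule nn_integral_indicator) measurable
  finally show ?thesis .
qed

lemma cond_nn_integral_eq_if_cond_distr_eq:
  assumes "finite_measure M" and [measurable]: "X \<in> measurable M N" "P \<in> sets M" "Q \<in> sets M"
    and "emeasure M P > 0" "emeasure M Q > 0"
    and same_dist: "\<forall>S \<in> sets N. measure M ({\<omega> \<in> space M. X \<omega> \<in> S} \<inter> P) / measure M P
                                 = measure M ({\<omega> \<in> space M. X \<omega> \<in> S} \<inter> Q) / measure M Q"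
    and [measurable]: "h \<in> borel_measurable N"
  shows "(\<integral>\<^sup>+ \<omega>. indicator P \<omega> * h (X \<omega>) \<partial>M) / emeasure M P
       = (\<integral>\<^sup>+ \<omega>. indicator Q \<omega> * h (X \<omega>) \<partial>M) / emeasure M Q"
proof -
  interpret finite_measure M by fact
  have cond_prob: "emeasure (cond_distr M N X R) S
      = ennreal (measure M ({\<omega> \<in> space M. X \<omega> \<in> S} \<inter> R) / measure M R)"
    if [measurable]: "R \<in> sets M" "S \<in> sets N" and "emeasure M R > 0" for R S
    using that by (simp add: emeasure_cond_distr emeasure_eq_measure divide_ennreal)
  have "cond_distr M N X P = cond_distr M N X Q"
  proof (rule measure_eqI)
    fix S assume "S \<in> sets (cond_distr M N X P)"
    then have [measurable]: "S \<in> sets N" by (simp add: cond_distr_def)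
    show "emeasure (cond_distr M N X P) S = emeasure (cond_distr M N X Q) S"
      using cond_prob[of P S] cond_prob[of Q S] same_dist assms(3-6) by simp
  qed (simp add: cond_distr_def)
  then show ?thesis
    using nn_integral_cond_distr[of X M N P h] nn_integral_cond_distr[of X M N Q h] assms(2-4,8)
    by simp
qed


lemma pos_event_sets [measurable]:
  assumes "Y \<in> measurable M (count_space UNIV)" "G \<in> measurable M (count_space UNIV)"
  shows "pos_event M Y G g \<in> sets M"
  unfolding pos_event_def using assms by measurable

lemma social_burden_scaled_cost:
  assumes "prob_space M" "X \<in> measurable M N"
    and "Y \<in> measurable M (count_space UNIV)" "G \<in> measurable M (count_space UNIV)"
    and "emeasure M (pos_event M Y G g) > 0" "emeasure M (pos_event M Y G g') > 0"
    and "\<forall>S \<in> sets N.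
           measure M ({\<omega> \<in> space M. X \<omega> \<in> S} \<inter> pos_event M Y G g) / measure M (pos_event M Y G g)
         = measure M ({\<omega> \<in> space M. X \<omega> \<in> S} \<inter> pos_event M Y G g') / measure M (pos_event M Y G g')"
    and "\<kappa> > 0" "\<forall>x x'. c g' x x' = \<kappa> * c g x x'" "\<forall>x x'. c g x x' \<ge> 0"
    and cost_meas: "acceptance_cost l (c g) \<tau> \<in> borel_measurable N"
  shows "social_burden M X Y G l c g' \<tau> = ennreal \<kappa> * social_burden M X Y G l c g \<tau>"
proof -
  let ?P = "pos_event M Y G g'" and ?h = "acceptance_cost l (c g) \<tau>"
  interpret prob_space M by fact
  have [measurable]: "?P \<in> sets M" "?h \<in> borel_measurable N"
    using assms(3,4) cost_meas by simp_all
  have "c g' = (\<lambda>x x'. \<kappa> * c g x x')"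
    using assms(9) by auto
  then have "social_burden M X Y G l c g' \<tau>
      = (\<integral>\<^sup>+ \<omega>. ennreal \<kappa> * (indicator ?P \<omega> * ?h (X \<omega>)) \<partial>M) / emeasure M ?P"
    unfolding social_burden_eq_acceptance_cost using assms(8,10)
    by (simp add: acceptance_cost_scale ac_simps)
  also have "\<dots> = ennreal \<kappa> * ((\<integral>\<^sup>+ \<omega>. indicator ?P \<omega> * ?h (X \<omega>) \<partial>M) / emeasure M ?P)"
    using assms(2) by (simp add: nn_integral_cmult divide_ennreal_def mult.assoc)
  also have "\<dots> = ennreal \<kappa> * social_burden M X Y G l c g \<tau>"
    unfolding social_burden_eq_acceptance_cost
    using cond_nn_integral_eq_if_cond_distr_eq[OF _ assms(2) _ _ assms(5,6,7) cost_meas] assms(1-4)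
    by simp
  finally show ?thesis .
qed

lemma enn2ereal_mult_minus_nonneg:
  assumes "\<kappa> \<ge> 1"
  shows "0 \<le> enn2ereal (ennreal \<kappa> * t) - enn2ereal t"
proof (cases t rule: ennreal_cases)
  case (real r)
  then have "r \<le> \<kappa> * r" using assms mult_right_mono[of 1 \<kappa> r] by simp
  then show ?thesis using real assms by (simp add: ennreal_mult[symmetric])
qed (use assms in \<open>simp add: ennreal_mult_top\<close>)

lemma enn2ereal_mult_minus_mono:
  assumes "\<kappa> \<ge> 1" and "s \<le> t"
  shows "enn2ereal (ennreal \<kappa> * s) - enn2ereal s \<le> enn2ereal (ennreal \<kappa> * t) - enn2ereal t"
proof (cases t rule: ennreal_cases)
  case (real r)
  then obtain q where q: "s = ennreal q" "0 \<le> q" "q \<le> r"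
    using assms(2) by (metis ennreal_cases ennreal_le_iff ennreal_neq_top top.extremum_uniqueI)
  have "(\<kappa> - 1) * q \<le> (\<kappa> - 1) * r"
    using q assms(1) by (intro mult_left_mono) auto
  then show ?thesis using q real assms(1) by (simp add: ennreal_mult[symmetric] algebra_simps)
qed (use assms in \<open>simp add: ennreal_mult_top\<close>)

theorem theorem3:
  fixes M :: "'w measure" and N :: "'x measure"
    and X :: "'w \<Rightarrow> 'x" and Y :: "'w \<Rightarrow> nat" and G :: "'w \<Rightarrow> grp"
    and l :: "'x \<Rightarrow> real" and c :: "grp \<Rightarrow> 'x \<Rightarrow> 'x \<Rightarrow> real" and \<kappa> :: real
  assumes "prob_space M"
    and "space N = UNIV"
    and "X \<in> measurable M N"
    and "Y \<in> measurable M (count_space UNIV)" and "\<forall>\<omega> \<in> space M. Y \<omega> \<in> {0, 1}"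
    and "G \<in> measurable M (count_space UNIV)"
    and "is_outcome_likelihood M N X Y l"
    and "\<forall>x. l x > 0"
    and "\<forall>g. emeasure M (pos_event M Y G g) > 0"
    and "\<forall>g x x'. c g x x' \<ge> 0"
    and same_dist: "\<forall>S \<in> sets N.
           measure M ({\<omega> \<in> space M. X \<omega> \<in> S} \<inter> pos_event M Y G GA) / measure M (pos_event M Y G GA)
         = measure M ({\<omega> \<in> space M. X \<omega> \<in> S} \<inter> pos_event M Y G GB) / measure M (pos_event M Y G GB)"
    and "outcome_monotonic l (c GA)"
    and "\<kappa> > 1"
    and "\<forall>x x'. c GB x x' = \<kappa> * c GA x x'"
  shows "(\<forall>\<tau>. 0 \<le> social_gap M X Y G l c \<tau>) \<and> mono (social_gap M X Y G l c)"
proof -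
  have l_meas: "l \<in> borel_measurable N"
    using assms(7) unfolding is_outcome_likelihood_def by simp
  have cost_nonneg: "\<forall>x x'. c GA x x' \<ge> 0"
    using assms(10) by simp
  have burden_GB: "social_burden M X Y G l c GB \<tau> = ennreal \<kappa> * social_burden M X Y G l c GA \<tau>" for \<tau>
    using assms(13)
    by (intro social_burden_scaled_cost[OF assms(1,3,4,6) assms(9)[rule_format] assms(9)[rule_format]
          same_dist _ assms(14) cost_nonneg borel_measurable_acceptance_cost[OF l_meas assms(12) cost_nonneg]])
      simp
  have gap: "social_gap M X Y G l c \<tau>
      = enn2ereal (ennreal \<kappa> * social_burden M X Y G l c GA \<tau>) - enn2ereal (social_burden M X Y G l c GA \<tau>)"
    for \<tau>
    unfolding social_gap_def burden_GB ..
  have "\<kappa> \<ge> 1"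
    using assms(13) by simp
  then show ?thesis
    unfolding gap mono_def
    by (auto intro: enn2ereal_mult_minus_nonneg enn2ereal_mult_minus_mono social_burden_mono[THEN monoD])
qed

end
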